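(* For every $k\ge1$, $\mathrm{ABD}(k\text{-CNF})\le^{\mathrm{CV}}\mathrm{ABD}((k+1)\text{-NAE})$ and $\mathrm{P\text{-}ABD}(k\text{-CNF})\le^{\mathrm{CV}}\mathrm{P\text{-}ABD}((k+1)\text{-NAE})$.
   Context: $k\text{-CNF}$ is the constraint language of all clauses of arity $k$. For a sign pattern $s=(s_1,\dots,s_k)\in\{0,1\}^k$, let $0_s=(a_1,\dots,a_k)$ be the unique tuple with $s_i\oplus a_i=0$ for all $i$ and $1_s$ the unique tuple with $s_i\oplus a_i=1$ for all $i$, and let $R^s_{\mathrm{NAE}}=\{0,1\}^k\setminus\{0_s,1_s\}$. $k\text{-NAE}$ is the set of all relations $R^s_{\mathrm{NAE}}$ of arity $k$. An instance of $\mathrm{ABD}(\Gamma)$ is $(\mathrm{KB},H,M)$, $\mathrm{KB}$ a $\Gamma$-formula, $H,M$ sets of variables; it asks whether there is $E\subseteq H\cup\{\neg x:x\in H\}$ with $\mathrm{KB}\wedge E$ satisfiable and $\mathrm{KB}\wedge E\models m$ for all $m\in M$; $\mathrm{P\text{-}ABD}(\Gamma)$ additionally requires $E\subseteq H$. A CV-reduction $A\le^{\mathrm{CV}}B$ is a polynomial-time map $f$ with $I\in A\iff f(I)\in B$ and $|\mathrm{var}(f(I))|\le|\mathrm{var}(I)|+O(1)$. *)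

theory Defs
  imports Main
begin

text \<open>A constraint is a pair (s, xs): a sign pattern s and a tuple of variables xs
  (variables are natural numbers). An instance (KB, H, M) is a list of constraints,
  and lists of hypothesis and manifestation variables.\<close>

type_synonym constr = "bool list \<times> nat list"
type_synonym inst = "constr list \<times> nat list \<times> nat list"

text \<open>0_s is the tuple a with s_i xor a_i = 0 for all i, i.e. a = s;
  1_s is the tuple with s_i xor a_i = 1, i.e. a = map Not s.\<close>

definition zero_s :: "bool list \<Rightarrow> bool list" where "zero_s s = s"
definition one_s :: "bool list \<Rightarrow> bool list" where "one_s s = map Not s"

definition rel_CNF :: "bool list \<Rightarrow> bool list set" where
  "rel_CNF s = {a. length a = length s} - {zero_s s}"

definition rel_NAE :: "bool list \<Rightarrow> bool list set" where
  "rel_NAE s = {a. length a = length s} - {zero_s s, one_s s}"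

definition kCNF :: "nat \<Rightarrow> bool list set set" where
  "kCNF k = {rel_CNF s | s. length s = k}"
definition kNAE :: "nat \<Rightarrow> bool list set set" where
  "kNAE k = {rel_NAE s | s. length s = k}"

definition wf_inst :: "nat \<Rightarrow> inst \<Rightarrow> bool" where
  "wf_inst k I = (\<forall>(s, xs) \<in> set (fst I). length s = k \<and> length xs = k)"

definition holds :: "(bool list \<Rightarrow> bool list set) \<Rightarrow> (nat \<Rightarrow> bool) \<Rightarrow> constr \<Rightarrow> bool" where
  "holds rel \<sigma> c = (map \<sigma> (snd c) \<in> rel (fst c))"

definition models :: "(bool list \<Rightarrow> bool list set) \<Rightarrow> (nat \<Rightarrow> bool) \<Rightarrow> constr list \<Rightarrow> bool" where
  "models rel \<sigma> kb = (\<forall>c \<in> set kb. holds rel \<sigma> c)"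

text \<open>A literal (x, b) is x if b, and the negation of x otherwise.\<close>
definition lits_true :: "(nat \<Rightarrow> bool) \<Rightarrow> (nat \<times> bool) set \<Rightarrow> bool" where
  "lits_true \<sigma> E = (\<forall>(x, b) \<in> E. \<sigma> x = b)"

definition explains :: "(bool list \<Rightarrow> bool list set) \<Rightarrow> inst \<Rightarrow> (nat \<times> bool) set \<Rightarrow> bool" where
  "explains rel I E =
     ((\<exists>\<sigma>. models rel \<sigma> (fst I) \<and> lits_true \<sigma> E) \<and>
      (\<forall>\<sigma>. models rel \<sigma> (fst I) \<and> lits_true \<sigma> E \<longrightarrow> (\<forall>m \<in> set (snd (snd I)). \<sigma> m)))"

definition ABD :: "(bool list \<Rightarrow> bool list set) \<Rightarrow> inst \<Rightarrow> bool" where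
  "ABD rel I = (\<exists>E. E \<subseteq> {(x, b). x \<in> set (fst (snd I))} \<and> explains rel I E)"

definition P_ABD :: "(bool list \<Rightarrow> bool list set) \<Rightarrow> inst \<Rightarrow> bool" where
  "P_ABD rel I = (\<exists>E. E \<subseteq> {(x, True) | x. x \<in> set (fst (snd I))} \<and> explains rel I E)"

definition vars :: "inst \<Rightarrow> nat set" where
  "vars I = (\<Union>c \<in> set (fst I). set (snd c)) \<union> set (fst (snd I)) \<union> set (snd (snd I))"

fun bin :: "nat \<Rightarrow> bool list" where
  "bin n = (if n = 0 then [] else odd n # bin (n div 2))"

definition enc_bits :: "bool list \<Rightarrow> bool list" where
  "enc_bits bs = concat (map (\<lambda>b. [True, b]) bs) @ [False]"

definition enc_nat :: "nat \<Rightarrow> bool list" where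
  "enc_nat n = enc_bits (bin n)"

definition enc_list :: "('a \<Rightarrow> bool list) \<Rightarrow> 'a list \<Rightarrow> bool list" where
  "enc_list e xs = concat (map (\<lambda>x. True # e x) xs) @ [False]"

definition enc_constr :: "constr \<Rightarrow> bool list" where
  "enc_constr c = enc_bits (fst c) @ enc_list enc_nat (snd c)"

definition enc_inst :: "inst \<Rightarrow> bool list" where
  "enc_inst I = enc_list enc_constr (fst I) @ enc_list enc_nat (fst (snd I))
                @ enc_list enc_nat (snd (snd I))"

datatype dir = Lft | Rgt

text \<open>A machine (Q, S, delta): states {0..<Q} (0 start, 1 halt), tape symbols {0..<S}
  (0 blank, 1 encodes False, 2 encodes True). Configuration (q, ls, rs): ls is the part of
  the tape left of the head (reversed), rs starts at the head cell. The tape is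
  one-way infinite to the right.\<close>

type_synonym tm = "nat \<times> nat \<times> (nat \<Rightarrow> nat \<Rightarrow> nat \<times> nat \<times> dir)"
type_synonym config = "nat \<times> nat list \<times> nat list"

definition wf_tm :: "tm \<Rightarrow> bool" where
  "wf_tm M = (case M of (Q, S, \<delta>) \<Rightarrow> 2 \<le> Q \<and> 3 \<le> S \<and>
     (\<forall>q < Q. \<forall>a < S. fst (\<delta> q a) < Q \<and> fst (snd (\<delta> q a)) < S))"

definition read_sym :: "nat list \<Rightarrow> nat" where
  "read_sym rs = (case rs of [] \<Rightarrow> 0 | a # _ \<Rightarrow> a)"

definition step :: "tm \<Rightarrow> config \<Rightarrow> config" where
  "step M c = (case M of (Q, S, \<delta>) \<Rightarrow> (case c of (q, ls, rs) \<Rightarrow>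
     if q = 1 then c else
     (case \<delta> q (read_sym rs) of (q', a', d) \<Rightarrow>
       (case d of
          Rgt \<Rightarrow> (q', a' # ls, tl rs)
        | Lft \<Rightarrow> (case ls of [] \<Rightarrow> (q', [], a' # tl rs)
                           | b # ls' \<Rightarrow> (q', ls', b # a' # tl rs))))))"

definition run :: "tm \<Rightarrow> nat \<Rightarrow> bool list \<Rightarrow> config" where
  "run M t x = (step M ^^ t) (0, [], map (\<lambda>b. if b then 2 else 1) x)"

definition tape_output :: "config \<Rightarrow> bool list" where
  "tape_output c = (case c of (q, ls, rs) \<Rightarrow>
     map (\<lambda>a. a = 2) (takeWhile (\<lambda>a. a = 1 \<or> a = 2) (rev ls @ rs)))"

definition poly_time_on :: "bool list set \<Rightarrow> (bool list \<Rightarrow> bool list) \<Rightarrow> bool" where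
  "poly_time_on D F = (\<exists>M c d. wf_tm M \<and>
     (\<forall>x \<in> D. \<exists>t \<le> c * (length x + 1) ^ d. fst (run M t x) = 1 \<and> tape_output (run M t x) = F x))"

definition cv_reduces ::
  "(inst \<Rightarrow> bool) \<Rightarrow> (inst \<Rightarrow> bool) \<Rightarrow> (inst \<Rightarrow> bool) \<Rightarrow> (inst \<Rightarrow> bool) \<Rightarrow> bool" where
  "cv_reduces wfA A wfB B = (\<exists>g :: inst \<Rightarrow> inst. \<exists>c :: nat.
     (\<exists>F. poly_time_on (enc_inst ` {I. wfA I}) F \<and> (\<forall>I. wfA I \<longrightarrow> F (enc_inst I) = enc_inst (g I))) \<and>
     (\<forall>I. wfA I \<longrightarrow> wfB (g I) \<and> (A I \<longleftrightarrow> B (g I)) \<and>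
            card (vars (g I)) \<le> card (vars I) + c))"

end

theory Submission
  imports Defs
begin

(* Rename every variable x to 2x + 1 and use the fresh variables 0 and 2 as the constants
   false and true. A clause with sign pattern s over xs becomes the NAE constraint with
   pattern s @ [0] over xs @ [0], and the guard NAE(0, ..., 0, 2) forces 0 and 2 apart.
   Once 0 is false, the new constraint excludes exactly the tuple falsifying the clause
   (its complement ends with 1). Adding 2 to the hypotheses and to the manifestations
   fixes the polarity: every explanation makes 2 true, and the positive literal 2 can be
   added to any explanation. Only two variables are added, and the encoding of the new
   instance is computed from the old one by a finite-state transducer, which a Turing
   machine simulates in quadratic time. *)

section \<open>Turing machine runs\<close>

definition reaches :: "tm \<Rightarrow> config \<Rightarrow> config \<Rightarrow> nat \<Rightarrow> bool" where
  "reaches M c c' n \<longleftrightarrow> (\<exists>t\<le>n. (step M ^^ t) c = c')"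

lemma reaches_funpow: "(step M ^^ n) c = c' \<Longrightarrow> reaches M c c' n"
  unfolding reaches_def by blast

lemma reaches_step: "step M c = c' \<Longrightarrow> reaches M c c' 1"
  by (rule reaches_funpow) simp

lemma reaches_trans:
  "reaches M c1 c2 n1 \<Longrightarrow> reaches M c2 c3 n2 \<Longrightarrow> reaches M c1 c3 (n1 + n2)"
proof -
  assume "reaches M c1 c2 n1" "reaches M c2 c3 n2"
  then obtain t1 t2 where "t1 \<le> n1" "(step M ^^ t1) c1 = c2" "t2 \<le> n2" "(step M ^^ t2) c2 = c3"
    unfolding reaches_def by blast
  then have "t2 + t1 \<le> n1 + n2" "(step M ^^ (t2 + t1)) c1 = c3"
    by (auto simp: funpow_add)
  then show ?thesis
    unfolding reaches_def by blast
qed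

lemma reaches_mono: "reaches M c c' n \<Longrightarrow> n \<le> n' \<Longrightarrow> reaches M c c' n'"
  unfolding reaches_def using le_trans by blast

definition outputs_within :: "tm \<Rightarrow> config \<Rightarrow> nat \<Rightarrow> bool list \<Rightarrow> bool" where
  "outputs_within M c n y \<longleftrightarrow> (\<exists>C. reaches M c C n \<and> fst C = 1 \<and> tape_output C = y)"

lemma outputs_withinI: "reaches M c C n \<Longrightarrow> fst C = 1 \<Longrightarrow> tape_output C = y \<Longrightarrow> outputs_within M c n y"
  unfolding outputs_within_def by blast

lemma outputs_within_reaches:
  "reaches M c c' n \<Longrightarrow> outputs_within M c' m y \<Longrightarrow> n + m \<le> k \<Longrightarrow> outputs_within M c k y"
  unfolding outputs_within_def using reaches_trans reaches_mono by blast

lemma outputs_within_mono: "outputs_within M c n y \<Longrightarrow> n \<le> n' \<Longrightarrow> outputs_within M c n' y"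
  unfolding outputs_within_def using reaches_mono by blast

definition bit_sym :: "bool \<Rightarrow> nat" where
  "bit_sym b = (if b then 2 else 1)"

lemma bit_sym_simps [simp]:
  "bit_sym False = 1" "bit_sym True = 2" "bit_sym b = Suc 0 \<longleftrightarrow> \<not> b" "bit_sym b = 2 \<longleftrightarrow> b"
  "bit_sym b < 3" "bit_sym b \<noteq> 0"
  unfolding bit_sym_def by auto

lemma run_eq_funpow: "run M t x = (step M ^^ t) (0, [], map bit_sym x)"
  unfolding run_def bit_sym_def ..

lemma tape_output_bits:
  assumes "set R \<subseteq> {0}"
  shows "tape_output (q, rev (map bit_sym Y), map bit_sym Z @ R) = Y @ Z"
proof -
  have "takeWhile (\<lambda>a. a = 1 \<or> a = 2) R = []"
    using assms by (cases R) auto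
  then show ?thesis
    by (simp add: tape_output_def takeWhile_append o_def)
qed

section \<open>Sequential transducers run in polynomial time\<close>

fun list_code :: "bool list \<Rightarrow> nat" where
  "list_code [] = 1"
| "list_code (b # w) = 2 * list_code w + of_bool b"

fun list_decode :: "nat \<Rightarrow> bool list" where
  "list_decode n = (if n \<le> 1 then [] else odd n # list_decode (n div 2))"

declare list_decode.simps [simp del]

lemma list_code_pos: "0 < list_code w"
  by (induction w) auto

lemma list_decode_code [simp]: "list_decode (list_code w) = w"
proof (induction w)
  case Nil
  then show ?case by (simp add: list_decode.simps)
next
  case (Cons b w)
  have "1 < list_code (b # w)"
    using list_code_pos[of w] by auto
  then show ?case
    using Cons by (subst list_decode.simps) auto
qed

lemma list_code_less: "list_code w < 2 ^ (length w + 1)"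
  by (induction w) auto

definition pack :: "bool list \<Rightarrow> bool \<Rightarrow> nat" where
  "pack w f = 2 * list_code w + of_bool f"

definition unpack :: "nat \<Rightarrow> bool list \<times> bool" where
  "unpack n = (list_decode (n div 2), odd n)"

lemma unpack_pack [simp]: "unpack (pack w f) = (w, f)"
  unfolding pack_def unpack_def by auto

lemma pack_less: "length w \<le> K \<Longrightarrow> pack w f < 2 * 2 ^ (K + 1)"
proof -
  assume "length w \<le> K"
  then have "(2::nat) ^ (length w + 1) \<le> 2 ^ (K + 1)"
    by (intro power_increasing) auto
  then have "list_code w < 2 ^ (K + 1)"
    using list_code_less[of w] by linarith
  moreover have "2 * list_code w + of_bool f < 2 * p" if "list_code w < p" for p :: nat
    using that by (cases f) auto
  ultimately show ?thesis
    unfolding pack_def by blast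
qed

fun out_chunks ::
  "(nat \<Rightarrow> bool \<Rightarrow> nat) \<Rightarrow> (nat \<Rightarrow> bool \<Rightarrow> bool list) \<Rightarrow> nat \<Rightarrow> bool list \<Rightarrow> bool list list"
where
  "out_chunks \<delta> \<omega> d [] = []"
| "out_chunks \<delta> \<omega> d (b # bs) = \<omega> d b # out_chunks \<delta> \<omega> (\<delta> d b) bs"

fun transduce ::
  "(nat \<Rightarrow> bool \<Rightarrow> nat) \<Rightarrow> (nat \<Rightarrow> bool \<Rightarrow> bool list) \<Rightarrow> nat \<Rightarrow> bool list \<Rightarrow> bool list"
where
  "transduce \<delta> \<omega> d [] = []"
| "transduce \<delta> \<omega> d (b # bs) = \<omega> d b @ transduce \<delta> \<omega> (\<delta> d b) bs"

lemma concat_out_chunks: "concat (out_chunks \<delta> \<omega> d xs) = transduce \<delta> \<omega> d xs"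
  by (induction xs arbitrary: d) auto

lemma length_out_chunks [simp]: "length (out_chunks \<delta> \<omega> d xs) = length xs"
  by (induction xs arbitrary: d) auto

lemma transduce_concat_map:
  assumes "\<And>x ys. transduce \<delta> \<omega> d (e x @ ys) = e' x @ transduce \<delta> \<omega> d ys"
  shows "transduce \<delta> \<omega> d (concat (map e xs) @ ys) = concat (map e' xs) @ transduce \<delta> \<omega> d ys"
  by (induction xs) (simp_all add: assms)

lemma transduce_enc_list:
  assumes "\<And>x ys. transduce \<delta> \<omega> d (True # e x @ ys) = True # e' x @ transduce \<delta> \<omega> d ys"
  shows "transduce \<delta> \<omega> d (enc_list e xs @ ys) =
    concat (map (\<lambda>x. True # e' x) xs) @ transduce \<delta> \<omega> d (False # ys)"
  unfolding enc_list_def using transduce_concat_map[of \<delta> \<omega> d "\<lambda>x. True # e x"] assms by simp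

locale transducer =
  fixes N K :: nat and \<delta> :: "nat \<Rightarrow> bool \<Rightarrow> nat" and \<omega> :: "nat \<Rightarrow> bool \<Rightarrow> bool list"
  assumes start_state: "0 < N"
    and next_state: "d < N \<Longrightarrow> \<delta> d b < N"
    and output_nonempty: "d < N \<Longrightarrow> \<omega> d b \<noteq> []"
    and output_length: "d < N \<Longrightarrow> length (\<omega> d b) \<le> K"
begin

lemma out_chunks_bounded:
  "d < N \<Longrightarrow> w \<in> set (out_chunks \<delta> \<omega> d xs) \<Longrightarrow> w \<noteq> [] \<and> length w \<le> K"
proof (induction xs arbitrary: d)
  case (Cons b xs)
  then show ?case
    using next_state[of d b] output_nonempty[of d b] output_length[of d b] by auto
qed simp

lemma length_transduce: "d < N \<Longrightarrow> length (transduce \<delta> \<omega> d xs) \<le> K * length xs"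
proof (induction xs arbitrary: d)
  case (Cons b xs)
  then show ?case
    using output_length[of d b] next_state[of d b] by fastforce
qed simp

text \<open>States of the machine: 0 start, 1 halt, 2 sweeping left, \<open>3 + d\<close> simulating
  the transducer in state \<open>d\<close>, and \<open>carry_state w f\<close> carrying the bits \<open>w\<close> that are
  still to be written rightwards. Symbols: 0 blank, \<open>bit_sym b\<close>, and \<open>chunk_sym w f\<close>
  for an output chunk \<open>w\<close> packed into one cell, \<open>f\<close> marking the leftmost chunk.
  The machine first replaces every input bit by the packed output chunk, then unpacks
  the chunks from right to left, shifting the already unpacked suffix to the right.\<close>

definition chunk_sym :: "bool list \<Rightarrow> bool \<Rightarrow> nat" where
  "chunk_sym w f = 3 + pack w f"

definition carry_state :: "bool list \<Rightarrow> bool \<Rightarrow> nat" where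
  "carry_state w f = 3 + N + pack w f"

definition num_states :: nat where
  "num_states = 3 + N + 2 * 2 ^ (K + 1)"

definition num_syms :: nat where
  "num_syms = 3 + 2 * 2 ^ (K + 1)"

definition scan_action :: "bool \<Rightarrow> nat \<Rightarrow> nat \<Rightarrow> nat \<times> nat \<times> dir" where
  "scan_action first d a =
    (if a = 1 \<or> a = 2 then (3 + \<delta> d (a = 2), chunk_sym (\<omega> d (a = 2)) first, Rgt)
     else if first then (1, 0, Rgt) else (2, 0, Lft))"

definition sweep_action :: "nat \<Rightarrow> nat \<times> nat \<times> dir" where
  "sweep_action a =
    (if a < 3 then (2, a, Lft)
     else case unpack (a - 3) of (w, f) \<Rightarrow>
       if tl w = [] then (if f then 1 else 2, bit_sym (hd w), if f then Rgt else Lft)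
       else (carry_state (tl w) f, bit_sym (hd w), Rgt))"

definition carry_action :: "bool list \<Rightarrow> bool \<Rightarrow> nat \<Rightarrow> nat \<times> nat \<times> dir" where
  "carry_action w f a =
    (if a = 1 \<or> a = 2 then carry_state (tl w @ [a = 2]) f
     else if tl w = [] then (if f then 1 else 2) else carry_state (tl w) f,
     bit_sym (hd w), Rgt)"

definition raw_action :: "nat \<Rightarrow> nat \<Rightarrow> nat \<times> nat \<times> dir" where
  "raw_action q a =
    (if q = 0 then scan_action True 0 a
     else if q = 2 then sweep_action a
     else if 3 \<le> q \<and> q < 3 + N then scan_action False (q - 3) a
     else if 3 + N \<le> q then case_prod carry_action (unpack (q - (3 + N))) a
     else (1, 0, Rgt))"

text \<open>Out-of-range actions, which never occur in the runs below, are replaced by halting.\<close>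

definition action :: "nat \<Rightarrow> nat \<Rightarrow> nat \<times> nat \<times> dir" where
  "action q a = (case raw_action q a of (q', a', m) \<Rightarrow>
     if q' < num_states \<and> a' < num_syms then (q', a', m) else (1, 0, Rgt))"

definition machine :: tm where
  "machine = (num_states, num_syms, action)"

lemma wf_machine: "wf_tm machine"
  unfolding wf_tm_def machine_def action_def num_states_def num_syms_def
  by (auto split: prod.splits)

lemma step_machine:
  assumes "q \<noteq> 1" "raw_action q (read_sym rs) = (q', a', m)" "q' < num_states" "a' < num_syms"
  shows "step machine (q, ls, rs) =
    (case m of Rgt \<Rightarrow> (q', a' # ls, tl rs)
     | Lft \<Rightarrow> (case ls of [] \<Rightarrow> (q', [], a' # tl rs) | b # ls' \<Rightarrow> (q', ls', b # a' # tl rs)))"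
  using assms unfolding step_def machine_def action_def by auto

lemma chunk_sym_less: "length w \<le> K \<Longrightarrow> chunk_sym w f < num_syms"
  unfolding chunk_sym_def num_syms_def using pack_less by auto

lemma carry_state_less: "length w \<le> K \<Longrightarrow> carry_state w f < num_states"
  unfolding carry_state_def num_states_def using pack_less by auto

lemma small_less: "a < 3 \<Longrightarrow> a < num_syms" "q < 3 + N \<Longrightarrow> q < num_states"
  unfolding num_syms_def num_states_def by auto

lemma chunk_sym_unpack [simp]: "\<not> chunk_sym w f < 3" "unpack (chunk_sym w f - 3) = (w, f)"
  unfolding chunk_sym_def by auto

lemma carry_state_unpack [simp]:
  "carry_state w f \<noteq> Suc 0" "\<not> carry_state w f < 3 + N" "unpack (carry_state w f - (3 + N)) = (w, f)"
  unfolding carry_state_def by auto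

lemma raw_action_simps:
  "raw_action 0 a = scan_action True 0 a"
  "raw_action 2 a = sweep_action a"
  "d < N \<Longrightarrow> raw_action (3 + d) a = scan_action False d a"
  "raw_action (carry_state w f) a = carry_action w f a"
  unfolding raw_action_def by (auto simp: carry_state_def)

lemmas action_simps = raw_action_simps scan_action_def sweep_action_def carry_action_def
  read_sym_def small_less chunk_sym_less carry_state_less next_state output_length

lemma step_start:
  "step machine (0, L, bit_sym b # rs) = (3 + \<delta> 0 b, chunk_sym (\<omega> 0 b) True # L, rs)"
  using start_state by (subst step_machine) (auto simp: action_simps)

lemma step_start_blank: "step machine (0, [], []) = (1, [0], [])"
  by (subst step_machine) (auto simp: action_simps)

lemma step_scan:
  "d < N \<Longrightarrow> step machine (3 + d, L, bit_sym b # rs) = (3 + \<delta> d b, chunk_sym (\<omega> d b) False # L, rs)"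
  by (subst step_machine) (auto simp: action_simps)

lemma step_scan_end: "d < N \<Longrightarrow> step machine (3 + d, a # L, []) = (2, L, [a, 0])"
  by (subst step_machine) (auto simp: action_simps)

lemma step_sweep: "a < 3 \<Longrightarrow> step machine (2, y # L, a # rs) = (2, L, y # a # rs)"
  by (subst step_machine) (auto simp: action_simps)

lemma step_sweep_blank: "step machine (2, y # L, []) = (2, L, [y, 0])"
  by (subst step_machine) (auto simp: action_simps)

lemma step_unpack_single: "step machine (2, p # L, chunk_sym [b] False # rs) = (2, L, p # bit_sym b # rs)"
  by (subst step_machine) (auto simp: action_simps)

lemma step_unpack_single_first: "step machine (2, L, chunk_sym [b] True # rs) = (1, bit_sym b # L, rs)"
  by (subst step_machine) (auto simp: action_simps)

lemma step_unpack:
  "w \<noteq> [] \<Longrightarrow> length (b # w) \<le> K \<Longrightarrow>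
    step machine (2, L, chunk_sym (b # w) f # rs) = (carry_state w f, bit_sym b # L, rs)"
  by (subst step_machine) (auto simp: action_simps)

lemma step_carry:
  "w \<noteq> [] \<Longrightarrow> length w \<le> K \<Longrightarrow>
    step machine (carry_state w f, L, bit_sym z # rs) = (carry_state (tl w @ [z]) f, bit_sym (hd w) # L, rs)"
  by (subst step_machine) (auto simp: action_simps)

lemma step_carry_blank:
  "w \<noteq> [] \<Longrightarrow> length w \<le> K \<Longrightarrow> set R \<subseteq> {0} \<Longrightarrow>
    step machine (carry_state w f, L, R) =
      (if tl w = [] then if f then 1 else 2 else carry_state (tl w) f, bit_sym (hd w) # L, tl R)"
  by (cases R; subst step_machine) (auto simp: action_simps)

lemma scan_run:
  assumes "d < N"
  shows "\<exists>d' < N. (step machine ^^ length xs) (3 + d, L, map bit_sym xs) =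
    (3 + d', rev (map (\<lambda>w. chunk_sym w False) (out_chunks \<delta> \<omega> d xs)) @ L, [])"
  using assms
proof (induction xs arbitrary: d L)
  case (Cons b xs)
  then show ?case
    using Cons.IH[of "\<delta> d b"] by (simp add: funpow_Suc_right step_scan next_state del: funpow.simps)
qed auto

lemma flush_run:
  "w \<noteq> [] \<Longrightarrow> length w \<le> K \<Longrightarrow> set R \<subseteq> {0} \<Longrightarrow>
    (step machine ^^ length w) (carry_state w f, L, R) =
      (if f then 1 else 2, rev (map bit_sym w) @ L, drop (length w) R)"
proof (induction w arbitrary: L R)
  case (Cons b w)
  show ?case
  proof (cases "w = []")
    case False
    have "set (tl R) \<subseteq> {0}"
      using Cons.prems by (cases R) auto
    with Cons False show ?thesis
      by (simp add: funpow_Suc_right step_carry_blank drop_Suc del: funpow.simps)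
  qed (use Cons.prems in \<open>simp add: step_carry_blank drop_Suc\<close>)
qed simp

lemma carry_run:
  "w \<noteq> [] \<Longrightarrow> length w \<le> K \<Longrightarrow> set R \<subseteq> {0} \<Longrightarrow>
    (step machine ^^ (length Os + length w)) (carry_state w f, L, map bit_sym Os @ R) =
      (if f then 1 else 2, rev (map bit_sym (w @ Os)) @ L, drop (length w) R)"
proof (induction Os arbitrary: w L)
  case Nil
  then show ?case by (simp add: flush_run)
next
  case (Cons z Os)
  have "(step machine ^^ (length (z # Os) + length w)) (carry_state w f, L, map bit_sym (z # Os) @ R) =
      (step machine ^^ (length Os + length (tl w @ [z]))) (carry_state (tl w @ [z]) f, bit_sym (hd w) # L, map bit_sym Os @ R)"
    using Cons.prems by (simp add: funpow_Suc_right step_carry del: funpow.simps)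
  also have "\<dots> = (if f then 1 else 2, rev (map bit_sym ((tl w @ [z]) @ Os)) @ bit_sym (hd w) # L, drop (length w) R)"
    using Cons.prems by (subst Cons.IH) (auto simp: le_diff_conv)
  finally show ?case
    using Cons.prems by (cases w) simp_all
qed

lemma sweep_run:
  "\<forall>y \<in> set ys. y < 3 \<Longrightarrow> R \<noteq> [] \<Longrightarrow> hd R < 3 \<Longrightarrow>
    (step machine ^^ length ys) (2, rev ys @ L, R) = (2, L, ys @ R)"
proof (induction ys arbitrary: R rule: rev_induct)
  case (snoc y ys)
  then show ?case
    by (cases R) (simp_all add: funpow_Suc_right step_sweep del: funpow.simps)
qed simp

lemma sweep_back:
  assumes "Y \<noteq> []"
  shows "(step machine ^^ (length Y + 1)) (2, rev (map bit_sym Y) @ p # L, []) =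
    (2, L, p # map bit_sym Y @ [0])"
proof -
  obtain Y' y where Y: "Y = Y' @ [y]"
    using assms by (cases Y rule: rev_cases) auto
  have "(step machine ^^ (length Y + 1)) (2, rev (map bit_sym Y) @ p # L, []) =
      step machine ((step machine ^^ length Y') (2, rev (map bit_sym Y') @ p # L, [bit_sym y, 0]))"
    by (simp add: Y funpow_swap1 step_sweep_blank)
  also have "\<dots> = step machine (2, p # L, map bit_sym Y @ [0])"
    using sweep_run[where ys="map bit_sym Y'" and R="[bit_sym y, 0]" and L="p # L"] by (simp add: Y)
  also have "\<dots> = (2, L, p # map bit_sym Y @ [0])"
    by (cases Y) (simp_all add: step_sweep)
  finally show ?thesis .
qed

lemma unpack_chunk:
  assumes "w \<noteq> []" "length w \<le> K"
  shows "reaches machine (2, p # L, chunk_sym w False # map bit_sym Os @ [0])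
    (2, L, p # map bit_sym (w @ Os) @ [0]) (2 * (length w + length Os) + 3)"
proof -
  obtain b w' where w: "w = b # w'"
    using assms(1) by (cases w) auto
  show ?thesis
  proof (cases "w' = []")
    case True
    then show ?thesis
      by (intro reaches_mono[OF reaches_step]) (simp_all add: w step_unpack_single)
  next
    case False
    have "reaches machine (2, p # L, chunk_sym w False # map bit_sym Os @ [0])
        (carry_state w' False, bit_sym b # p # L, map bit_sym Os @ [0]) 1"
      using False assms(2) by (intro reaches_step) (simp add: w step_unpack)
    moreover have "reaches machine (carry_state w' False, bit_sym b # p # L, map bit_sym Os @ [0])
        (2, rev (map bit_sym (w @ Os)) @ p # L, []) (length Os + length w')"
      using False assms(2) by (intro reaches_funpow) (simp add: w carry_run Suc_le_eq)
    moreover have "reaches machine (2, rev (map bit_sym (w @ Os)) @ p # L, [])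
        (2, L, p # map bit_sym (w @ Os) @ [0]) (length (w @ Os) + 1)"
      by (intro reaches_funpow sweep_back) (simp add: w)
    ultimately show ?thesis
      by (rule reaches_mono[OF reaches_trans[OF reaches_trans]]) (simp add: w)
  qed
qed

lemma unpack_first_chunk:
  assumes "w \<noteq> []" "length w \<le> K"
  shows "outputs_within machine (2, [], chunk_sym w True # map bit_sym Os @ [0])
    (2 * (length w + length Os) + 3) (w @ Os)"
proof -
  obtain b w' where w: "w = b # w'"
    using assms(1) by (cases w) auto
  show ?thesis
  proof (cases "w' = []")
    case True
    have "tape_output (1, rev (map bit_sym [b]), map bit_sym Os @ [0]) = w @ Os"
      by (subst tape_output_bits) (simp_all add: w True)
    then show ?thesis
      by (intro outputs_within_mono[OF outputs_withinI[OF reaches_step]])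
        (simp_all add: w True step_unpack_single_first)
  next
    case False
    have "reaches machine (2, [], chunk_sym w True # map bit_sym Os @ [0])
        (carry_state w' True, [bit_sym b], map bit_sym Os @ [0]) 1"
      using False assms(2) by (intro reaches_step) (simp add: w step_unpack)
    moreover have "reaches machine (carry_state w' True, [bit_sym b], map bit_sym Os @ [0])
        (1, rev (map bit_sym (w @ Os)), []) (length Os + length w')"
      using False assms(2) by (intro reaches_funpow) (simp add: w carry_run Suc_le_eq)
    moreover have "tape_output (1, rev (map bit_sym (w @ Os)), []) = w @ Os"
      using tape_output_bits[of "[]" _ "w @ Os" "[]"] by simp
    ultimately show ?thesis
      by (intro outputs_within_mono[OF outputs_withinI[OF reaches_trans]]) (auto simp: w)
  qed
qed

lemma unpack_all:
  assumes "\<forall>w \<in> set (c1 # cs @ [c]). w \<noteq> [] \<and> length w \<le> K"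
    and "length (concat (c1 # cs @ [c])) + length Os \<le> T"
  shows "outputs_within machine
    (2, rev (map (\<lambda>w. chunk_sym w False) cs) @ [chunk_sym c1 True], chunk_sym c False # map bit_sym Os @ [0])
    ((length cs + 2) * (2 * T + 3)) (concat (c1 # cs @ [c]) @ Os)"
  using assms
proof (induction cs arbitrary: c Os rule: rev_induct)
  case Nil
  have "reaches machine (2, [chunk_sym c1 True], chunk_sym c False # map bit_sym Os @ [0])
      (2, [], chunk_sym c1 True # map bit_sym (c @ Os) @ [0]) (2 * T + 3)"
    using Nil.prems by (intro reaches_mono[OF unpack_chunk]) auto
  moreover have "outputs_within machine (2, [], chunk_sym c1 True # map bit_sym (c @ Os) @ [0])
      (2 * T + 3) (c1 @ c @ Os)"
    using Nil.prems by (intro outputs_within_mono[OF unpack_first_chunk]) auto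
  ultimately show ?case
    by (auto intro: outputs_within_reaches)
next
  case (snoc c' cs)
  have "reaches machine
      (2, chunk_sym c' False # rev (map (\<lambda>w. chunk_sym w False) cs) @ [chunk_sym c1 True],
        chunk_sym c False # map bit_sym Os @ [0])
      (2, rev (map (\<lambda>w. chunk_sym w False) cs) @ [chunk_sym c1 True], chunk_sym c' False # map bit_sym (c @ Os) @ [0])
      (2 * T + 3)"
    using snoc.prems by (intro reaches_mono[OF unpack_chunk]) auto
  moreover have "outputs_within machine
      (2, rev (map (\<lambda>w. chunk_sym w False) cs) @ [chunk_sym c1 True], chunk_sym c' False # map bit_sym (c @ Os) @ [0])
      ((length cs + 2) * (2 * T + 3)) (concat (c1 # cs @ [c']) @ c @ Os)"
    using snoc.prems by (intro snoc.IH) auto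
  ultimately show ?case
    by (auto intro: outputs_within_reaches)
qed

lemma scan_phase:
  "\<exists>d' < N. reaches machine (0, [], map bit_sym (b # xs))
    (3 + d', rev (map (\<lambda>w. chunk_sym w False) (out_chunks \<delta> \<omega> (\<delta> 0 b) xs)) @ [chunk_sym (\<omega> 0 b) True], [])
    (length (b # xs))"
proof -
  obtain d' where "d' < N" and scan: "reaches machine (3 + \<delta> 0 b, [chunk_sym (\<omega> 0 b) True], map bit_sym xs)
      (3 + d', rev (map (\<lambda>w. chunk_sym w False) (out_chunks \<delta> \<omega> (\<delta> 0 b) xs)) @ [chunk_sym (\<omega> 0 b) True], [])
      (length xs)"
    using scan_run[of "\<delta> 0 b" xs] next_state start_state reaches_funpow by blast
  have "reaches machine (0, [], map bit_sym (b # xs)) (3 + \<delta> 0 b, [chunk_sym (\<omega> 0 b) True], map bit_sym xs) 1"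
    by (intro reaches_step) (simp add: step_start)
  from reaches_trans[OF this scan] \<open>d' < N\<close> show ?thesis
    by auto
qed

lemma outputs_transduce:
  "outputs_within machine (0, [], map bit_sym x)
    (length x + 1 + length x * (2 * length (transduce \<delta> \<omega> 0 x) + 3)) (transduce \<delta> \<omega> 0 x)"
proof (cases x)
  case Nil
  have "tape_output (1, [0], []) = []"
    by (simp add: tape_output_def)
  then show ?thesis
    using Nil by (intro outputs_within_mono[OF outputs_withinI[OF reaches_step]]) (simp_all add: step_start_blank)
next
  case (Cons b xs)
  define T where "T = length (transduce \<delta> \<omega> 0 x)"
  have chunks: "out_chunks \<delta> \<omega> 0 x = \<omega> 0 b # out_chunks \<delta> \<omega> (\<delta> 0 b) xs"
    by (simp add: Cons)
  have bounded: "\<forall>w \<in> set (out_chunks \<delta> \<omega> 0 x). w \<noteq> [] \<and> length w \<le> K"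
    using out_chunks_bounded start_state by blast
  obtain d' where "d' < N" and scanned: "reaches machine (0, [], map bit_sym x)
      (3 + d', rev (map (\<lambda>w. chunk_sym w False) (out_chunks \<delta> \<omega> (\<delta> 0 b) xs)) @ [chunk_sym (\<omega> 0 b) True], [])
      (length x)"
    using scan_phase[of b xs] by (auto simp: Cons)
  show ?thesis
  proof (cases "out_chunks \<delta> \<omega> (\<delta> 0 b) xs" rule: rev_cases)
    case Nil
    then have "reaches machine (0, [], map bit_sym x) (2, [], [chunk_sym (\<omega> 0 b) True, 0]) (length x + 1)"
      using \<open>d' < N\<close> by (intro reaches_trans[OF scanned] reaches_step) (simp add: step_scan_end)
    moreover have "outputs_within machine (2, [], chunk_sym (\<omega> 0 b) True # map bit_sym [] @ [0])
        (2 * (length (\<omega> 0 b) + length ([] :: bool list)) + 3) (\<omega> 0 b @ [])"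
      using bounded chunks by (intro unpack_first_chunk) auto
    ultimately show ?thesis
      using Nil chunks concat_out_chunks[of \<delta> \<omega> 0 x] by (auto simp: Cons intro: outputs_within_reaches)
  next
    case (snoc cs c)
    let ?packed = "(2, rev (map (\<lambda>w. chunk_sym w False) cs) @ [chunk_sym (\<omega> 0 b) True],
      chunk_sym c False # map bit_sym [] @ [0])"
    have "reaches machine (0, [], map bit_sym x) ?packed (length x + 1)"
      using snoc \<open>d' < N\<close> by (intro reaches_trans[OF scanned] reaches_step) (simp add: step_scan_end)
    moreover have "length cs + 2 = length x"
      using arg_cong[OF snoc, of length] by (simp add: Cons)
    moreover have "outputs_within machine ?packed ((length cs + 2) * (2 * T + 3))
        (concat (\<omega> 0 b # cs @ [c]) @ [])"
      using bounded chunks snoc by (intro unpack_all) (auto simp: T_def simp flip: concat_out_chunks)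
    ultimately show ?thesis
      using chunks snoc concat_out_chunks[of \<delta> \<omega> 0 x] by (auto simp: T_def intro: outputs_within_reaches)
  qed
qed

end

lemma quadratic_time_bound:
  fixes n T K :: nat
  assumes "T \<le> K * n"
  shows "n + 1 + n * (2 * T + 3) \<le> (2 * K + 6) * (n + 1) ^ 2"
proof -
  have "n * (2 * T + 3) \<le> n * (2 * (K * n) + 3)"
    using assms by simp
  also have "\<dots> \<le> (2 * K + 3) * (n + 1) ^ 2"
    by (simp add: power2_eq_square algebra_simps)
  finally show ?thesis
    by (simp add: power2_eq_square algebra_simps)
qed

theorem (in transducer) poly_time_transduce: "poly_time_on D (transduce \<delta> \<omega> 0)"
proof -
  have "outputs_within machine (0, [], map bit_sym x) ((2 * K + 6) * (length x + 1) ^ 2) (transduce \<delta> \<omega> 0 x)" for x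
    using outputs_transduce quadratic_time_bound[OF length_transduce[OF start_state]]
    by (rule outputs_within_mono)
  then have "\<forall>x \<in> D. \<exists>t \<le> (2 * K + 6) * (length x + 1) ^ 2.
      fst (run machine t x) = 1 \<and> tape_output (run machine t x) = transduce \<delta> \<omega> 0 x"
    unfolding outputs_within_def reaches_def run_eq_funpow by fastforce
  then show ?thesis
    unfolding poly_time_on_def using wf_machine by blast
qed

section \<open>The reduction and its encoding\<close>

declare bin.simps [simp del]

definition lift_var :: "nat \<Rightarrow> nat" where
  "lift_var x = 2 * x + 1"

definition nae_constr :: "constr \<Rightarrow> constr" where
  "nae_constr c = (fst c @ [False], map lift_var (snd c) @ [0])"

definition nae_guard :: "nat \<Rightarrow> constr" where
  "nae_guard k = (replicate (k + 1) False, replicate k 0 @ [2])"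

definition nae_inst :: "nat \<Rightarrow> inst \<Rightarrow> inst" where
  "nae_inst k I = (map nae_constr (fst I) @ [nae_guard k],
     map lift_var (fst (snd I)) @ [2], map lift_var (snd (snd I)) @ [2])"

text \<open>State 0 reads
  the constraint list, 1 and 2 the sign bits of a constraint, 3 its variable list and 4 and 5
  one variable; 6 to 8 and 9 to 11 read the hypotheses and the manifestations, 12 is final.
  Opening a variable emits an extra bit \<open>True\<close>, turning \<open>x\<close> into \<open>2x + 1\<close>; closing a list
  emits the appended element (the sign \<open>False\<close> with the variable 0, the guard, the variable 2).\<close>

definition reduction_next :: "nat \<Rightarrow> bool \<Rightarrow> nat" where
  "reduction_next d b =
    (if d = 0 then (if b then 1 else 6)
     else if d = 1 then (if b then 2 else 3)
     else if d = 2 then 1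
     else if d = 3 then (if b then 4 else 0)
     else if d = 4 then (if b then 5 else 3)
     else if d = 5 then 4
     else if d = 6 then (if b then 7 else 9)
     else if d = 7 then (if b then 8 else 6)
     else if d = 8 then 7
     else if d = 9 then (if b then 10 else 12)
     else if d = 10 then (if b then 11 else 9)
     else if d = 11 then 10
     else 12)"

definition reduction_out :: "nat \<Rightarrow> nat \<Rightarrow> bool \<Rightarrow> bool list" where
  "reduction_out k d b =
    (if d = 0 then (if b then [True] else True # enc_constr (nae_guard k) @ [False])
     else if d = 1 then (if b then [True] else [True, False, False])
     else if d = 3 then (if b then [True, True, True] else [True, False, False])
     else if d = 6 \<or> d = 9 then (if b then [True, True, True] else True # enc_nat 2 @ [False])
     else if d = 2 \<or> d = 5 \<or> d = 8 \<or> d = 11 then [b]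
     else if d = 4 \<or> d = 7 \<or> d = 10 then (if b then [True] else [False])
     else [False])"

lemma enc_nat_two: "enc_nat 2 = [True, False, True, True, False]"
  by (simp add: enc_nat_def enc_bits_def bin.simps)

lemma enc_nat_zero: "enc_nat 0 = [False]"
  by (simp add: enc_nat_def enc_bits_def bin.simps)

lemma enc_nat_lift_var: "enc_nat (lift_var x) = True # True # enc_nat x"
  unfolding enc_nat_def enc_bits_def lift_var_def by (subst bin.simps) simp

lemma reduction_transducer:
  "transducer 13 (length (enc_constr (nae_guard k)) + 7) reduction_next (reduction_out k)"
  by unfold_locales (auto simp: reduction_next_def reduction_out_def enc_nat_two)

abbreviation reduce_enc :: "nat \<Rightarrow> nat \<Rightarrow> bool list \<Rightarrow> bool list" where
  "reduce_enc k \<equiv> transduce reduction_next (reduction_out k)"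

lemma reduce_enc_bits:
  "d \<in> {1, 4, 7, 10} \<Longrightarrow>
    reduce_enc k d (concat (map (\<lambda>b. [True, b]) s) @ ys) = concat (map (\<lambda>b. [True, b]) s) @ reduce_enc k d ys"
  by (rule transduce_concat_map) (auto simp: reduction_next_def reduction_out_def)

lemma reduce_enc_sign: "reduce_enc k 1 (enc_bits s @ ys) = enc_bits (s @ [False]) @ reduce_enc k 3 ys"
  using reduce_enc_bits[of 1 k s "False # ys"]
  by (simp add: enc_bits_def reduction_next_def reduction_out_def)

lemma reduce_enc_nat:
  "d \<in> {4, 7, 10} \<Longrightarrow> reduce_enc k d (enc_nat x @ ys) = enc_nat x @ reduce_enc k (d - 1) ys"
  using reduce_enc_bits[of d k "bin x" "False # ys"]
  by (auto simp: enc_nat_def enc_bits_def reduction_next_def reduction_out_def)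

lemma reduce_enc_var:
  "d \<in> {3, 6, 9} \<Longrightarrow>
    reduce_enc k d (True # enc_nat x @ ys) = True # enc_nat (lift_var x) @ reduce_enc k d ys"
  using reduce_enc_nat[of "d + 1" k x ys]
  by (auto simp: enc_nat_lift_var reduction_next_def reduction_out_def)

lemma reduce_enc_vars:
  "reduce_enc k 3 (enc_list enc_nat xs @ ys) = enc_list enc_nat (map lift_var xs @ [0]) @ reduce_enc k 0 ys"
  using transduce_enc_list[where e'="\<lambda>x. enc_nat (lift_var x)", OF reduce_enc_var[of 3]]
  by (simp add: enc_list_def enc_nat_zero reduction_next_def reduction_out_def o_def)

lemma reduce_enc_hyps:
  "d \<in> {6, 9} \<Longrightarrow>
    reduce_enc k d (enc_list enc_nat xs @ ys) = enc_list enc_nat (map lift_var xs @ [2]) @ reduce_enc k (d + 3) ys"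
  using transduce_enc_list[where e'="\<lambda>x. enc_nat (lift_var x)", OF reduce_enc_var[of d]]
  by (auto simp: enc_list_def reduction_next_def reduction_out_def o_def)

lemma reduce_enc_constr:
  "reduce_enc k 0 (True # enc_constr c @ ys) = True # enc_constr (nae_constr c) @ reduce_enc k 0 ys"
  using reduce_enc_sign[of k "fst c"] reduce_enc_vars[of k "snd c" ys]
  by (simp add: enc_constr_def nae_constr_def reduction_next_def reduction_out_def)

lemma reduce_enc_constrs:
  "reduce_enc k 0 (enc_list enc_constr cs @ ys) =
    enc_list enc_constr (map nae_constr cs @ [nae_guard k]) @ reduce_enc k 6 ys"
  using transduce_enc_list[where e'="\<lambda>c. enc_constr (nae_constr c)", OF reduce_enc_constr]
  by (simp add: enc_list_def reduction_next_def reduction_out_def o_def)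

lemma reduce_enc_inst: "reduce_enc k 0 (enc_inst I) = enc_inst (nae_inst k I)"
  using reduce_enc_hyps[of 6 k "fst (snd I)"] reduce_enc_hyps[of 9 k "snd (snd I)" "[]"]
  by (simp add: enc_inst_def nae_inst_def reduce_enc_constrs)

section \<open>Correctness of the reduction\<close>

definition lift_assignment :: "(nat \<Rightarrow> bool) \<Rightarrow> nat \<Rightarrow> bool" where
  "lift_assignment \<sigma> y = (if odd y then \<sigma> (y div 2) else y = 2)"

lemma lift_assignment_simps [simp]:
  "lift_assignment \<sigma> (lift_var x) = \<sigma> x" "lift_assignment \<sigma> 0 = False" "lift_assignment \<sigma> 2 = True"
  "lift_assignment \<sigma> \<circ> lift_var = \<sigma>"
  unfolding lift_assignment_def lift_var_def by auto

lemma lift_var_neq [simp]: "lift_var x \<noteq> 0" "lift_var x \<noteq> 2"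
  unfolding lift_var_def by presburger+

lemma inj_lift_var: "inj lift_var"
  by (rule injI) (simp add: lift_var_def)

lemma holds_nae_constr:
  assumes "length (snd c) = length (fst c)" "\<not> \<sigma> 0"
  shows "holds rel_NAE \<sigma> (nae_constr c) \<longleftrightarrow> holds rel_CNF (\<sigma> \<circ> lift_var) c"
  using assms by (auto simp: holds_def rel_NAE_def rel_CNF_def nae_constr_def zero_s_def one_s_def)

lemma holds_nae_guard:
  assumes "1 \<le> k"
  shows "holds rel_NAE \<sigma> (nae_guard k) \<longleftrightarrow> \<sigma> 0 \<noteq> \<sigma> 2"
proof -
  have "replicate k a @ [b] = replicate k c @ [c] \<longleftrightarrow> a = c \<and> b = c" for a b c :: bool
    using assms by (auto simp: replicate_eq_replicate)
  then show ?thesis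
    by (auto simp: holds_def rel_NAE_def nae_guard_def zero_s_def one_s_def
        simp flip: replicate_append_same)
qed

lemma models_nae_inst_guard:
  "models rel_NAE \<sigma> (fst (nae_inst k I)) \<Longrightarrow> 1 \<le> k \<Longrightarrow> \<sigma> 0 \<noteq> \<sigma> 2"
  using holds_nae_guard by (auto simp: models_def nae_inst_def)

lemma models_nae_inst:
  assumes "wf_inst k I" "1 \<le> k" "\<not> \<sigma> 0"
  shows "models rel_NAE \<sigma> (fst (nae_inst k I)) \<longleftrightarrow> \<sigma> 2 \<and> models rel_CNF (\<sigma> \<circ> lift_var) (fst I)"
proof -
  have "holds rel_NAE \<sigma> (nae_constr c) \<longleftrightarrow> holds rel_CNF (\<sigma> \<circ> lift_var) c" if "c \<in> set (fst I)" for c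
    using assms that by (intro holds_nae_constr) (auto simp: wf_inst_def)
  then show ?thesis
    using assms holds_nae_guard[of k \<sigma>] by (auto simp: models_def nae_inst_def)
qed

lemma lits_true_insert [simp]: "lits_true \<sigma> (insert (x, b) E) \<longleftrightarrow> \<sigma> x = b \<and> lits_true \<sigma> E"
  by (simp add: lits_true_def)

lemma lits_true_apfst [simp]: "lits_true \<sigma> (apfst f ` E) \<longleftrightarrow> lits_true (\<sigma> \<circ> f) E"
  by (force simp: lits_true_def)

definition abduces :: "(bool list \<Rightarrow> bool list set) \<Rightarrow> bool set \<Rightarrow> inst \<Rightarrow> bool" where
  "abduces rel B I \<longleftrightarrow> (\<exists>E \<subseteq> set (fst (snd I)) \<times> B. explains rel I E)"

lemma ABD_eq_abduces: "ABD rel = abduces rel UNIV"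
  by (auto simp: fun_eq_iff ABD_def abduces_def)

lemma P_ABD_eq_abduces: "P_ABD rel = abduces rel {True}"
  by (auto simp: fun_eq_iff P_ABD_def abduces_def)

lemma explains_nae_inst:
  assumes "wf_inst k I" "1 \<le> k" "explains rel_CNF I E"
  shows "explains rel_NAE (nae_inst k I) (insert (2, True) (apfst lift_var ` E))"
  unfolding explains_def
proof (intro conjI allI impI)
  obtain \<sigma> where "models rel_CNF \<sigma> (fst I)" "lits_true \<sigma> E"
    using assms(3) unfolding explains_def by blast
  then show "\<exists>\<sigma>'. models rel_NAE \<sigma>' (fst (nae_inst k I)) \<and> lits_true \<sigma>' (insert (2, True) (apfst lift_var ` E))"
    using assms(1,2) by (intro exI[of _ "lift_assignment \<sigma>"]) (simp add: models_nae_inst)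
next
  fix \<sigma>'
  assume \<sigma>': "models rel_NAE \<sigma>' (fst (nae_inst k I)) \<and> lits_true \<sigma>' (insert (2, True) (apfst lift_var ` E))"
  then have "\<sigma>' 2" "\<not> \<sigma>' 0"
    using models_nae_inst_guard[of \<sigma>' k I] assms(2) by auto
  with \<sigma>' have "models rel_CNF (\<sigma>' \<circ> lift_var) (fst I)" "lits_true (\<sigma>' \<circ> lift_var) E"
    using assms(1,2) by (simp_all add: models_nae_inst)
  then have "\<forall>m \<in> set (snd (snd I)). \<sigma>' (lift_var m)"
    using assms(3) unfolding explains_def by auto
  with \<open>\<sigma>' 2\<close> show "\<forall>m \<in> set (snd (snd (nae_inst k I))). \<sigma>' m"
    by (auto simp: nae_inst_def)
qed

lemma explains_of_nae_inst:
  assumes "wf_inst k I" "1 \<le> k" "E' \<subseteq> set (fst (snd (nae_inst k I))) \<times> UNIV"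
    and "explains rel_NAE (nae_inst k I) E'"
  shows "explains rel_CNF I {(x, b). (lift_var x, b) \<in> E'}"
  unfolding explains_def
proof (intro conjI allI impI)
  obtain \<sigma>' where \<sigma>': "models rel_NAE \<sigma>' (fst (nae_inst k I))" "lits_true \<sigma>' E'"
    using assms(4) unfolding explains_def by blast
  then have "\<sigma>' 2"
    using assms(4) unfolding explains_def by (auto simp: nae_inst_def)
  with \<sigma>' have "\<not> \<sigma>' 0"
    using models_nae_inst_guard assms(2) by blast
  with \<sigma>' \<open>\<sigma>' 2\<close> show "\<exists>\<sigma>. models rel_CNF \<sigma> (fst I) \<and> lits_true \<sigma> {(x, b). (lift_var x, b) \<in> E'}"
    using assms(1,2) by (intro exI[of _ "\<sigma>' \<circ> lift_var"]) (auto simp: models_nae_inst lits_true_def)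
  have no_neg_2: "(2, False) \<notin> E'"
    using \<sigma>'(2) \<open>\<sigma>' 2\<close> by (auto simp: lits_true_def)
  fix \<sigma>
  assume \<sigma>: "models rel_CNF \<sigma> (fst I) \<and> lits_true \<sigma> {(x, b). (lift_var x, b) \<in> E'}"
  have "lits_true (lift_assignment \<sigma>) E'"
    unfolding lits_true_def
  proof (intro ballI, clarify)
    fix y b
    assume "(y, b) \<in> E'"
    moreover have "y = 2 \<or> (\<exists>x. y = lift_var x)"
      using \<open>(y, b) \<in> E'\<close> assms(3) by (auto simp: nae_inst_def)
    ultimately show "lift_assignment \<sigma> y = b"
      using \<sigma> no_neg_2 by (cases b) (auto simp: lits_true_def)
  qed
  moreover have "models rel_NAE (lift_assignment \<sigma>) (fst (nae_inst k I))"
    using \<sigma> assms(1,2) by (simp add: models_nae_inst)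
  ultimately have "\<forall>m \<in> set (snd (snd (nae_inst k I))). lift_assignment \<sigma> m"
    using assms(4) unfolding explains_def by blast
  then show "\<forall>m \<in> set (snd (snd I)). \<sigma> m"
    by (auto simp: nae_inst_def)
qed

lemma abduces_nae_inst:
  assumes "True \<in> B" "wf_inst k I" "1 \<le> k"
  shows "abduces rel_NAE B (nae_inst k I) \<longleftrightarrow> abduces rel_CNF B I"
proof
  assume "abduces rel_NAE B (nae_inst k I)"
  then obtain E' where sub: "E' \<subseteq> set (fst (snd (nae_inst k I))) \<times> B"
    and ex: "explains rel_NAE (nae_inst k I) E'"
    unfolding abduces_def by blast
  have "E' \<subseteq> set (fst (snd (nae_inst k I))) \<times> UNIV"
    using sub by blast
  then have "explains rel_CNF I {(x, b). (lift_var x, b) \<in> E'}"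
    by (rule explains_of_nae_inst[OF assms(2,3) _ ex])
  moreover have "{(x, b). (lift_var x, b) \<in> E'} \<subseteq> set (fst (snd I)) \<times> B"
  proof
    fix p
    assume "p \<in> {(x, b). (lift_var x, b) \<in> E'}"
    then obtain x b where p: "p = (x, b)" "(lift_var x, b) \<in> E'"
      by blast
    with sub have "lift_var x \<in> set (fst (snd (nae_inst k I)))" "b \<in> B"
      by blast+
    then show "p \<in> set (fst (snd I)) \<times> B"
      by (auto simp: p nae_inst_def inj_image_mem_iff[OF inj_lift_var])
  qed
  ultimately show "abduces rel_CNF B I"
    unfolding abduces_def by blast
next
  assume "abduces rel_CNF B I"
  then obtain E where sub: "E \<subseteq> set (fst (snd I)) \<times> B" and ex: "explains rel_CNF I E"
    unfolding abduces_def by blast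
  have "insert (2, True) (apfst lift_var ` E) \<subseteq> set (fst (snd (nae_inst k I))) \<times> B"
    using sub assms(1) by (auto simp: nae_inst_def)
  with explains_nae_inst[OF assms(2,3) ex] show "abduces rel_NAE B (nae_inst k I)"
    unfolding abduces_def by blast
qed

lemma wf_nae_inst: "wf_inst k I \<Longrightarrow> wf_inst (k + 1) (nae_inst k I)"
  by (auto simp: wf_inst_def nae_inst_def nae_constr_def nae_guard_def)

lemma card_vars_nae_inst: "card (vars (nae_inst k I)) \<le> card (vars I) + 2"
proof -
  have "finite (vars I)"
    by (simp add: vars_def)
  have "vars (nae_inst k I) \<subseteq> lift_var ` vars I \<union> {0, 2}"
    by (auto simp: vars_def nae_inst_def nae_constr_def nae_guard_def split: if_splits)
  then have "card (vars (nae_inst k I)) \<le> card (lift_var ` vars I \<union> {0, 2})"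
    using \<open>finite (vars I)\<close> by (intro card_mono) auto
  also have "\<dots> \<le> card (lift_var ` vars I) + card {0 :: nat, 2}"
    by (rule card_Un_le)
  also have "\<dots> \<le> card (vars I) + 2"
    using card_image_le[OF \<open>finite (vars I)\<close>, of lift_var] by simp
  finally show ?thesis .
qed

theorem theorem29:
  fixes k :: nat
  assumes "1 \<le> k"
  shows "cv_reduces (wf_inst k) (ABD rel_CNF) (wf_inst (k + 1)) (ABD rel_NAE) \<and>
         cv_reduces (wf_inst k) (P_ABD rel_CNF) (wf_inst (k + 1)) (P_ABD rel_NAE)"
proof -
  have poly: "poly_time_on (enc_inst ` {I. wf_inst k I}) (reduce_enc k 0)"
    by (rule transducer.poly_time_transduce[OF reduction_transducer])
  have "cv_reduces (wf_inst k) (abduces rel_CNF B) (wf_inst (k + 1)) (abduces rel_NAE B)"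
    if "True \<in> B" for B
    unfolding cv_reduces_def
    using poly reduce_enc_inst wf_nae_inst card_vars_nae_inst abduces_nae_inst[OF that _ assms]
    by (intro exI[of _ "nae_inst k"] exI[of _ "2 :: nat"] conjI exI[of _ "reduce_enc k 0"]) auto
  from this[of UNIV] this[of "{True}"] show ?thesis
    by (simp add: ABD_eq_abduces P_ABD_eq_abduces)
qed

end
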